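(* For real $m>0$ let $\lambda_{1,m}=m^2+\gamma_{1,m}^2$, where $\gamma_{1,m}$ is the unique $\gamma\in\left(\frac{\pi}{2},\pi\right)$ with $\gamma\tan\gamma=-m\tanh m$. Then there exists $m^*\in(0,+\infty)$ such that $\lambda_{1,m^*}=\min_{m>0}\lambda_{1,m}$.
   Context: This concerns the rectangle case $\ell=1$: for integer $m\ge1$, $\lambda_{1,m}$ is an eigenvalue of $\Delta^2u=-\lambda\Delta u$ on $(0,\pi)\times(-1,1)$ with $u=0$ on the boundary, $u_y=0$ on $y=\pm1$, $u_{xx}=0$ on $x\in\{0,\pi\}$; here $m$ ranges over all positive reals. *)

theory Defs
  imports Complex_Main
begin

definition gamma1 :: "real \<Rightarrow> real" where
  "gamma1 m = (THE g. pi / 2 < g \<and> g < pi \<and> g * tan g = - m * tanh m)"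

definition lambda1 :: "real \<Rightarrow> real" where
  "lambda1 m = m\<^sup>2 + (gamma1 m)\<^sup>2"

end

theory Submission
  imports Defs "HOL-Analysis.Analysis"
begin

text \<open>
  Multiplying the equation \<open>\<gamma> tan \<gamma> = -m tanh m\<close> by \<open>cos \<gamma> cosh m\<close> gives an equation
  \<open>F(m,\<gamma>) = 0\<close> with \<open>F\<close> continuous on the closed rectangle \<open>[0,\<pi>] \<times> [\<pi>/2,\<pi>]\<close>. Its zero set
  \<open>C\<close> is compact, so \<open>m\<^sup>2 + \<gamma>\<^sup>2\<close> attains a minimum on \<open>C\<close>. Besides the graph of \<open>\<gamma>\<^sub>1\<close> over
  \<open>(0,\<pi>]\<close>, \<open>C\<close> only contains the point \<open>(0,\<pi>)\<close>, of value \<open>\<pi>\<^sup>2\<close>; a numerical estimate shows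
  \<open>\<lambda>\<^sub>1(1/2) < \<pi>\<^sup>2\<close>, so the minimum is attained at some \<open>(m\<^sup>*, \<gamma>\<^sub>1(m\<^sup>*))\<close> with \<open>m\<^sup>* > 0\<close>. It is
  a global minimum of \<open>\<lambda>\<^sub>1\<close> because \<open>\<lambda>\<^sub>1(m) \<ge> m\<^sup>2 > \<pi>\<^sup>2\<close> for \<open>m > \<pi>\<close>.
\<close>

lemma strict_mono_on_mult_tan: "strict_mono_on {pi/2<..<pi} (\<lambda>x. x * tan x)"
proof (rule strict_mono_onI)
  fix a b :: real
  assume a: "a \<in> {pi/2<..<pi}" and b: "b \<in> {pi/2<..<pi}" and "a < b"
  have cos_nz: "cos x \<noteq> 0" if "a \<le> x" "x \<le> b" for x
    using cos_lt_zero_pi[of x] that a b by auto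
  have has_deriv: "DERIV (\<lambda>x. x * tan x) x :> tan x + x * inverse ((cos x)\<^sup>2)"
    if "a \<le> x" "x \<le> b" for x
    using cos_nz[OF that] by (auto intro!: derivative_eq_intros)
  show "a * tan a < b * tan b"
  proof (rule DERIV_pos_imp_increasing_open[OF \<open>a < b\<close>])
    fix x assume x: "a < x" "x < b"
    have c: "cos x \<noteq> 0" using cos_nz x by auto
    have "tan x + x * inverse ((cos x)\<^sup>2) = (sin x * cos x + x) / (cos x)\<^sup>2"
      using c by (simp add: tan_def field_simps power2_eq_square)
    moreover have "\<bar>sin x * cos x\<bar> \<le> 1"
      using abs_sin_le_one[of x] abs_cos_le_one[of x] by (simp add: abs_mult mult_le_one)
    moreover have "x > 1" using x a pi_gt3 by auto
    ultimately have "tan x + x * inverse ((cos x)\<^sup>2) > 0" using c by simp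
    with has_deriv[of x] x show "\<exists>y. DERIV (\<lambda>x. x * tan x) x :> y \<and> 0 < y" by auto
  next
    show "continuous_on {a..b} (\<lambda>x. x * tan x)"
      by (rule continuous_at_imp_continuous_on) (auto intro: DERIV_isCont[OF has_deriv])
  qed
qed

definition gamma_residual :: "real \<Rightarrow> real \<Rightarrow> real" where
  "gamma_residual m g = g * sin g * cosh m + m * sinh m * cos g"

lemma gamma_residual_eq_0_iff:
  assumes "pi/2 < g" "g < pi"
  shows "gamma_residual m g = 0 \<longleftrightarrow> g * tan g = - m * tanh m"
proof -
  have "cos g \<noteq> 0" using cos_lt_zero_pi[of g] assms by auto
  moreover have "cosh m \<noteq> 0" by (metis cosh_real_pos less_irrefl)
  ultimately show ?thesis
    by (simp add: gamma_residual_def tan_def tanh_def field_simps) (auto simp: algebra_simps)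
qed

lemma gamma_residual_zero_interior:
  assumes "0 < m" "pi/2 \<le> g" "g \<le> pi" "gamma_residual m g = 0"
  shows "pi/2 < g \<and> g < pi"
proof -
  have "gamma_residual m (pi/2) > 0" by (simp add: gamma_residual_def)
  moreover have "gamma_residual m pi < 0" using assms(1) by (simp add: gamma_residual_def)
  ultimately have "g \<noteq> pi/2" "g \<noteq> pi" using assms(4) by force+
  then show ?thesis using assms(2,3) by auto
qed

lemma gamma1_unique:
  assumes "pi/2 < g" "g < pi" "g * tan g = - m * tanh m"
  shows "gamma1 m = g"
  unfolding gamma1_def
proof (rule the_equality)
  fix h assume h: "pi/2 < h \<and> h < pi \<and> h * tan h = - m * tanh m"
  show "h = g"
    using strict_mono_onD[OF strict_mono_on_mult_tan, of h g]
          strict_mono_onD[OF strict_mono_on_mult_tan, of g h] h assms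
    by (cases h g rule: linorder_cases) auto
qed (use assms in auto)

lemma gamma1_exists:
  assumes "0 < m"
  shows "\<exists>g. pi/2 < g \<and> g < pi \<and> g * tan g = - m * tanh m"
proof -
  have "\<exists>g. pi/2 \<le> g \<and> g \<le> pi \<and> gamma_residual m g = 0"
    using assms unfolding gamma_residual_def
    by (intro IVT2') (auto intro!: continuous_intros)
  then obtain g where "pi/2 \<le> g" "g \<le> pi" "gamma_residual m g = 0" by blast
  with gamma_residual_zero_interior[OF assms] gamma_residual_eq_0_iff show ?thesis by blast
qed

lemma gamma1_bounds_residual:
  assumes "0 < m"
  shows "pi/2 < gamma1 m" "gamma1 m < pi" "gamma_residual m (gamma1 m) = 0"
proof -
  obtain g where g: "pi/2 < g" "g < pi" "g * tan g = - m * tanh m"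
    using gamma1_exists[OF assms] by blast
  with gamma1_unique[OF g] gamma_residual_eq_0_iff[OF g(1,2)]
  show "pi/2 < gamma1 m" "gamma1 m < pi" "gamma_residual m (gamma1 m) = 0" by auto
qed

lemma tan_one_twentieth_le: "tan (1/20::real) \<le> 40/799"
proof -
  have "0 \<le> sin (1/40::real)" using pi_gt3 by (intro sin_ge_zero) auto
  moreover have "sin (1/40::real) \<le> 1/40" by (rule sin_x_le_x) simp
  ultimately have "sin (1/40::real) ^ 2 \<le> (1/40)^2" by (intro power_mono)
  then have cos_ge: "cos (1/20::real) \<ge> 799/800"
    using cos_double_sin[of "1/40::real"] by (simp add: power2_eq_square)
  have "0 \<le> sin (1/20::real)" using pi_gt3 by (intro sin_ge_zero) auto
  moreover have "sin (1/20::real) \<le> 1/20" by (rule sin_x_le_x) simp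
  ultimately have "sin (1/20) / cos (1/20) \<le> (1/20::real) / (799/800)"
    using cos_ge by (intro frac_le) auto
  then show ?thesis by (simp add: tan_def)
qed

lemma tanh_one_half_gt: "tanh (1/2::real) > 320/799"
proof -
  have "(5/4::real)^4 \<le> exp (1/4) ^ 4"
    using exp_ge_add_one_self[of "1/4::real"] by (intro power_mono) auto
  also have "exp (1/4::real) ^ 4 = exp 1"
    using exp_of_nat_mult[of 4 "1/4::real"] by simp
  finally have e: "exp (1::real) \<ge> 625/256" by (simp add: eval_nat_numeral)
  have "tanh (1/2::real) = (1 - exp (-1)) / (1 + exp (-1))"
    by (simp add: tanh_real_altdef)
  also have "\<dots> = (exp 1 - 1) / (exp 1 + 1)"
    by (simp add: exp_minus divide_simps)
  finally have t: "tanh (1/2::real) = (exp 1 - 1) / (exp 1 + 1)" .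
  show ?thesis unfolding t using e by (simp add: field_simps)
qed

lemma gamma1_one_half_lt: "gamma1 (1/2) < pi - 1/20"
proof (rule ccontr)
  define g where "g = gamma1 (1/2)"
  assume "\<not> gamma1 (1/2) < pi - 1/20"
  then have ge: "pi - 1/20 \<le> g" by (simp add: g_def)
  have g: "pi/2 < g" "g < pi" "g * tan g = - (1/2) * tanh (1/2)"
    using gamma1_bounds_residual[of "1/2"] gamma_residual_eq_0_iff by (auto simp: g_def)
  have "(pi - 1/20) * tan (pi - 1/20) \<le> g * tan g"
    using strict_mono_onD[OF strict_mono_on_mult_tan, of "pi - 1/20" g] ge g pi_gt3
    by (cases "g = pi - 1/20") auto
  moreover have "tan (pi - 1/20) = - tan (1/20::real)" by (simp add: tan_def)
  ultimately have "(1/2) * tanh (1/2::real) \<le> (pi - 1/20) * tan (1/20)" using g by simp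
  also have "\<dots> \<le> 4 * (40/799)"
    using pi_less_4 tan_one_twentieth_le tan_gt_zero[of "1/20"] pi_gt3
    by (intro mult_mono) auto
  finally show False using tanh_one_half_gt by simp
qed

lemma lambda1_one_half_lt: "lambda1 (1/2) < pi\<^sup>2"
proof -
  have "pi/2 < gamma1 (1/2)" "gamma1 (1/2) < pi - 1/20"
    using gamma1_bounds_residual[of "1/2"] gamma1_one_half_lt by auto
  then have "(gamma1 (1/2))\<^sup>2 \<le> (pi - 1/20)\<^sup>2"
    using pi_gt3 by (intro power_mono) auto
  then show ?thesis using pi_gt3 by (simp add: lambda1_def power2_eq_square algebra_simps)
qed

definition gamma_curve :: "(real \<times> real) set" where
  "gamma_curve = ({0..pi} \<times> {pi/2..pi}) \<inter> {p. gamma_residual (fst p) (snd p) = 0}"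

lemma compact_gamma_curve: "compact gamma_curve"
  unfolding gamma_curve_def gamma_residual_def
  by (intro compact_Int_closed compact_Times compact_Icc closed_Collect_eq)
     (auto intro!: continuous_intros)

lemma graph_gamma1_in_gamma_curve:
  assumes "0 < m" "m \<le> pi"
  shows "(m, gamma1 m) \<in> gamma_curve"
  using gamma1_bounds_residual[OF assms(1)] assms by (auto simp: gamma_curve_def)

lemma gamma_curve_below_pi_sq:
  assumes "(m, g) \<in> gamma_curve" "m\<^sup>2 + g\<^sup>2 < pi\<^sup>2"
  shows "0 < m \<and> g = gamma1 m"
proof -
  have r: "0 \<le> m" "pi/2 \<le> g" "g \<le> pi" "gamma_residual m g = 0"
    using assms(1) by (auto simp: gamma_curve_def)
  have "m \<noteq> 0"
  proof
    assume "m = 0"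
    with r have "sin g = 0" using pi_gt3 by (simp add: gamma_residual_def)
    then have "g = pi" using sin_gt_zero[of g] r pi_gt3 by (cases "g < pi") auto
    with \<open>m = 0\<close> assms(2) show False by simp
  qed
  then have "0 < m" using r by simp
  with r gamma_residual_zero_interior have "pi/2 < g" "g < pi" by blast+
  with r \<open>0 < m\<close> show ?thesis by (metis gamma1_unique gamma_residual_eq_0_iff)
qed

theorem theorem5p3:
  shows "\<exists>ms::real. 0 < ms \<and> (\<forall>m::real. 0 < m \<longrightarrow> lambda1 ms \<le> lambda1 m)"
proof -
  have "(0, pi) \<in> gamma_curve" by (simp add: gamma_curve_def gamma_residual_def)
  then obtain ms gs where p: "(ms, gs) \<in> gamma_curve"
    and min: "\<And>q. q \<in> gamma_curve \<Longrightarrow> ms\<^sup>2 + gs\<^sup>2 \<le> (fst q)\<^sup>2 + (snd q)\<^sup>2"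
    using continuous_attains_inf[OF compact_gamma_curve, of "\<lambda>q. (fst q)\<^sup>2 + (snd q)\<^sup>2"]
    by (fastforce intro: continuous_intros)
  have min_graph: "lambda1 ms \<le> lambda1 m" if "0 < m" "m \<le> pi" "gs = gamma1 ms" for m
    using min[OF graph_gamma1_in_gamma_curve[OF that(1,2)]] that(3) by (simp add: lambda1_def)
  have "ms\<^sup>2 + gs\<^sup>2 < pi\<^sup>2"
    using min[OF graph_gamma1_in_gamma_curve[of "1/2"]] lambda1_one_half_lt pi_gt3
    by (simp add: lambda1_def)
  with gamma_curve_below_pi_sq[OF p] have ms: "0 < ms" "gs = gamma1 ms" by auto
  with \<open>ms\<^sup>2 + gs\<^sup>2 < pi\<^sup>2\<close> have "lambda1 ms < pi\<^sup>2" by (simp add: lambda1_def)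
  have "lambda1 ms \<le> lambda1 m" if "0 < m" for m
  proof (cases "m \<le> pi")
    case False
    then have "pi\<^sup>2 \<le> m\<^sup>2" using pi_gt3 by (intro power_mono) auto
    moreover have "m\<^sup>2 \<le> lambda1 m" by (simp add: lambda1_def)
    ultimately show ?thesis using \<open>lambda1 ms < pi\<^sup>2\<close> by linarith
  qed (use min_graph ms that in auto)
  with ms show ?thesis by blast
qed

end
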